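(* Fix labels $z_1,\dots,z_n\in[K]$ such that every community size $n_k=\#\{i:z_i=k\}$ is positive (so $\mathbf{N}=\mathrm{diag}(n_1,\dots,n_K)$ is invertible). Then $\tilde{\mathbf{L}}\tilde{\mathbf{L}}^\top\mathbf{x}=T\mathbf{x}$ for every $\mathbf{x}\in\mathcal{S}^\perp$, and if $\tilde{\mathbf{x}}^{(1)},\dots,\tilde{\mathbf{x}}^{(K)}$ are orthonormal left singular vectors of $\tilde{\mathbf{M}}$ for the singular values $\tilde\lambda_1,\dots,\tilde\lambda_K$, then the vectors $\tilde{\mathbf{u}}^{(i)}=\mathbf{\Phi}\mathbf{N}^{-1/2}\tilde{\mathbf{x}}^{(i)}\in\mathcal{S}$ are orthonormal and satisfy $\tilde{\mathbf{L}}\tilde{\mathbf{L}}^\top\tilde{\mathbf{u}}^{(i)}=\tilde\lambda_i^2\tilde{\mathbf{u}}^{(i)}$. Consequently the SVD of $\tilde{\mathbf{L}}$ consists of the singular value $\sqrt T$ with multiplicity $n-K$, whose left singular vectors form an orthonormal basis of $\mathcal{S}^\perp$, together with the singular values $\tilde\lambda_1,\dots,\tilde\lambda_K$ with corresponding left singular vectors $\tilde{\mathbf{u}}^{(1)},\dots,\tilde{\mathbf{u}}^{(K)}$.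
   Context: Let $\mathbf{B}^{(1)},\dots,\mathbf{B}^{(T)}\in[0,1]^{K\times K}$ be symmetric with all entries positive, $\rho\in(0,1]$, and $P^{(t)}_{ij}=\rho B^{(t)}_{z_iz_j}$. $\tilde d^{(t)}_i=\sum_jP^{(t)}_{ij}$, $\tilde{\mathbf{D}}^{(t)}=\mathrm{diag}(\tilde d^{(t)}_i)$, $\tilde{\mathbf{L}}^{(t)}=\mathbf{I}_n-\tilde{\mathbf{D}}^{(t)-1/2}\mathbf{P}^{(t)}\tilde{\mathbf{D}}^{(t)-1/2}$, $\tilde{\mathbf{L}}=[\tilde{\mathbf{L}}^{(1)}\mid\cdots\mid\tilde{\mathbf{L}}^{(T)}]\in\mathbb{R}^{n\times nT}$. Community matrices: $\tilde Q^{(t)}_{kl}=\frac{n_k}{n}\frac{n_l}{n}B^{(t)}_{kl}$, $\tilde{\mathbf{D}}_Q^{(t)}$ the diagonal matrix of row sums of $\tilde{\mathbf{Q}}^{(t)}$, $\tilde{\mathbf{M}}^{(t)}=\mathbf{I}_K-\tilde{\mathbf{D}}_Q^{(t)-1/2}\tilde{\mathbf{Q}}^{(t)}\tilde{\mathbf{D}}_Q^{(t)-1/2}$, $\tilde{\mathbf{M}}=[\tilde{\mathbf{M}}^{(1)}\mid\cdots\mid\tilde{\mathbf{M}}^{(T)}]\in\mathbb{R}^{K\times KT}$ with singular values $\tilde\lambda_1\le\cdots\le\tilde\lambda_K$. $\mathbf{\Phi}\in\{0,1\}^{n\times K}$ has entries $\Phi_{ik}=1$ iff $z_i=k$; $\mathcal{S}$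 is the column span of $\mathbf{\Phi}$ and $\mathcal{S}^\perp=\{\mathbf{x}\in\mathbb{R}^n:\sum_{i:z_i=k}x_i=0\ \forall k\}$. *)

theory Defs
  imports "HOL-Analysis.Analysis"
begin

text \<open>Nodes are indexed by a finite type 'n (n = CARD('n)), communities by a finite
  type 'k (K = CARD('k)), time layers by a finite type 't (T = CARD('t)).\<close>

definition diag_mat :: "real^'n \<Rightarrow> real^'n^'n" where
  "diag_mat v = (\<chi> i j. if i = j then v $ i else 0)"

definition Pmat :: "('t \<Rightarrow> real^'k^'k) \<Rightarrow> real \<Rightarrow> ('n \<Rightarrow> 'k) \<Rightarrow> 't \<Rightarrow> real^'n^'n" where
  "Pmat B \<rho> z t = (\<chi> i j. \<rho> * B t $ z i $ z j)"

definition dtil :: "('t \<Rightarrow> real^'k^'k) \<Rightarrow> real \<Rightarrow> ('n \<Rightarrow> 'k) \<Rightarrow> 't \<Rightarrow> real^'n" where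
  "dtil B \<rho> z t = (\<chi> i. \<Sum>j\<in>UNIV. Pmat B \<rho> z t $ i $ j)"

definition Ltil :: "('t \<Rightarrow> real^'k^'k) \<Rightarrow> real \<Rightarrow> ('n \<Rightarrow> 'k) \<Rightarrow> 't \<Rightarrow> real^'n^'n" where
  "Ltil B \<rho> z t =
     mat 1 - diag_mat (\<chi> i. 1 / sqrt (dtil B \<rho> z t $ i)) ** Pmat B \<rho> z t
               ** diag_mat (\<chi> i. 1 / sqrt (dtil B \<rho> z t $ i))"

text \<open>Horizontal concatenation [L^(1) | ... | L^(T)]: column (j,t) is column j of L^(t).\<close>
definition Lcat :: "('t::finite \<Rightarrow> real^'k^'k) \<Rightarrow> real \<Rightarrow> ('n::finite \<Rightarrow> 'k) \<Rightarrow> real^('n \<times> 't)^'n" where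
  "Lcat B \<rho> z = (\<chi> i p. Ltil B \<rho> z (snd p) $ i $ fst p)"

definition csize :: "('n \<Rightarrow> 'k) \<Rightarrow> 'k \<Rightarrow> nat" where
  "csize z k = card {i. z i = k}"

definition Qmat :: "('t \<Rightarrow> real^'k^'k) \<Rightarrow> ('n::finite \<Rightarrow> 'k) \<Rightarrow> 't \<Rightarrow> real^'k^'k" where
  "Qmat B z t = (\<chi> k l. (real (csize z k) / real CARD('n)) * (real (csize z l) / real CARD('n)) * B t $ k $ l)"

definition DQ :: "('t \<Rightarrow> real^'k^'k) \<Rightarrow> ('n::finite \<Rightarrow> 'k) \<Rightarrow> 't \<Rightarrow> real^'k^'k" where
  "DQ B z t = diag_mat (\<chi> k. \<Sum>l\<in>UNIV. Qmat B z t $ k $ l)"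

definition Mtil :: "('t \<Rightarrow> real^'k^'k) \<Rightarrow> ('n::finite \<Rightarrow> 'k) \<Rightarrow> 't \<Rightarrow> real^'k^'k" where
  "Mtil B z t =
     mat 1 - diag_mat (\<chi> k. 1 / sqrt (DQ B z t $ k $ k)) ** Qmat B z t
               ** diag_mat (\<chi> k. 1 / sqrt (DQ B z t $ k $ k))"

definition Mcat :: "('t::finite \<Rightarrow> real^'k^'k) \<Rightarrow> ('n::finite \<Rightarrow> 'k) \<Rightarrow> real^('k \<times> 't)^'k" where
  "Mcat B z = (\<chi> k p. Mtil B z (snd p) $ k $ fst p)"

definition Phi :: "('n \<Rightarrow> 'k) \<Rightarrow> real^'k^'n" where
  "Phi z = (\<chi> i k. if z i = k then 1 else 0)"

definition Ninvsqrt :: "('n \<Rightarrow> 'k) \<Rightarrow> real^'k^'k" where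
  "Ninvsqrt z = diag_mat (\<chi> k. 1 / sqrt (real (csize z k)))"

definition Sspace :: "('n \<Rightarrow> 'k::finite) \<Rightarrow> (real^'n) set" where
  "Sspace z = span (columns (Phi z))"

definition Sperp :: "('n \<Rightarrow> 'k) \<Rightarrow> (real^'n) set" where
  "Sperp z = {x. \<forall>k. (\<Sum>i\<in>{i. z i = k}. x $ i) = 0}"

definition left_singular_vector :: "real^'c^'r \<Rightarrow> real \<Rightarrow> real^'r \<Rightarrow> bool" where
  "left_singular_vector A \<sigma> x \<longleftrightarrow> \<sigma> \<ge> 0 \<and> norm x = 1 \<and>
     (\<exists>v. norm v = 1 \<and> A *v v = \<sigma> *\<^sub>R x \<and> transpose A *v x = \<sigma> *\<^sub>R v)"

definition orthonormal_on :: "'i set \<Rightarrow> ('i \<Rightarrow> real^'m) \<Rightarrow> bool" where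
  "orthonormal_on I u \<longleftrightarrow> (\<forall>i\<in>I. \<forall>j\<in>I. u i \<bullet> u j = (if i = j then 1 else 0))"

end

(* Let Psi = Phi N^(-1/2). Its columns are orthonormal and S^perp is the kernel of Psi^T.
   The expected degree of node i is rho * sum_l n_l B_(z_i l), so after normalisation the
   factors rho and n_k cancel and L^(t) = I - Psi S^(t) Psi^T, where M^(t) = I - S^(t).
   Hence L^(t) and its transpose fix S^perp pointwise and intertwine Psi with M^(t) and with
   its transpose.  For the concatenation this gives L L^T = sum_t L^(t) L^(t)^T = T I on
   S^perp, and every singular pair (x, v) of M lifts to the singular pair of L formed by
   Psi x and the vector obtained by applying Psi to each block of v. *)

theory Submission
  imports Defs
begin

declare transpose_matrix_vector [simp del]

lemma diag_mat_mult_entry: "(diag_mat a ** X) $ i $ j = a $ i * X $ i $ j"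
  by (simp add: diag_mat_def matrix_matrix_mult_def if_distrib[of "\<lambda>x. x * _"] cong: if_cong)

lemma mult_diag_mat_entry: "(X ** diag_mat b) $ i $ j = X $ i $ j * b $ j"
  by (simp add: diag_mat_def matrix_matrix_mult_def if_distrib cong: if_cong)

lemma transpose_diff: "transpose (A - B) = transpose A - transpose (B :: 'a::ab_group_add^'n^'m)"
  by (simp add: transpose_def vec_eq_iff)

lemma inner_mult_vec: "(A *v a) \<bullet> b = a \<bullet> (transpose A *v (b :: real^'n))"
  by (metis dot_lmul_matrix vector_transpose_matrix)

lemma matrix_vector_mult_sum: "A *v (\<Sum>t\<in>I. f t) = (\<Sum>t\<in>I. A *v f t)"
  by (induction I rule: infinite_finite_induct) (simp_all add: matrix_vector_right_distrib)

lemma isometry_inner: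
  assumes "transpose G ** G = mat 1"
  shows "(G *v a) \<bullet> (G *v b) = a \<bullet> (b :: real^'k)"
  by (simp add: inner_mult_vec matrix_vector_mul_assoc assms)

lemma left_singular_vector_eigen:
  assumes "left_singular_vector A \<sigma> x"
  shows "(A ** transpose A) *v x = \<sigma>\<^sup>2 *\<^sub>R x"
  using assms unfolding left_singular_vector_def
  by (auto simp: matrix_vector_mul_assoc[symmetric] matrix_vector_mult_scaleR power2_eq_square)

lemma left_singular_vector_of_eigen:
  fixes A :: "real^'c^'r"
  assumes eig: "(A ** transpose A) *v x = c *\<^sub>R x" and "0 < c" and "norm x = 1"
  shows "left_singular_vector A (sqrt c) x"
proof -
  define v where "v = (1 / sqrt c) *\<^sub>R (transpose A *v x)"
  have "(transpose A *v x) \<bullet> (transpose A *v x) = x \<bullet> ((A ** transpose A) *v x)"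
    by (simp add: inner_mult_vec matrix_vector_mul_assoc)
  also have "\<dots> = c"
    using eig \<open>norm x = 1\<close> by (simp add: norm_eq_1)
  finally have "norm v = 1"
    using \<open>0 < c\<close> by (simp add: v_def norm_eq_sqrt_inner)
  moreover have "A *v v = sqrt c *\<^sub>R x"
    using eig \<open>0 < c\<close>
    by (simp add: v_def matrix_vector_mult_scaleR matrix_vector_mul_assoc real_div_sqrt)
  moreover have "transpose A *v x = sqrt c *\<^sub>R v"
    using \<open>0 < c\<close> by (simp add: v_def)
  ultimately show ?thesis
    unfolding left_singular_vector_def using assms by auto
qed

lemma subspace_orthonormal_basis_indexed:
  fixes V :: "(real^'n) set"
  assumes "subspace V"
  obtains w :: "nat \<Rightarrow> real^'n"
  where "orthonormal_on {..<dim V} w" "w ` {..<dim V} \<subseteq> V" "span (w ` {..<dim V}) = V"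
proof -
  obtain W where W: "W \<subseteq> V" "pairwise orthogonal W" "\<And>x. x \<in> W \<Longrightarrow> norm x = 1"
    "independent W" "card W = dim V" "span W = V"
    using orthonormal_basis_subspace[OF assms] by blast
  obtain w where w: "bij_betw w {..<dim V} W"
    using ex_bij_betw_nat_finite[OF independent_imp_finite[OF W(4)]] W(5)
    by (auto simp: atLeast0LessThan)
  have "orthonormal_on {..<dim V} w"
    unfolding orthonormal_on_def
  proof (intro ballI)
    fix i j assume ij: "i \<in> {..<dim V}" "j \<in> {..<dim V}"
    then have "w i \<in> W" "w j \<in> W" "w i = w j \<longleftrightarrow> i = j"
      using w by (auto simp: bij_betw_def inj_on_eq_iff)
    then show "w i \<bullet> w j = (if i = j then 1 else 0)"
      using W(2,3) by (auto simp: pairwise_def orthogonal_def norm_eq_1)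
  qed
  then show thesis
    using that w W(1,6) by (simp add: bij_betw_def)
qed

section \<open>Horizontal concatenation\<close>

definition hcat :: "('t::finite \<Rightarrow> real^'a^'b) \<Rightarrow> real^('a \<times> 't)^'b" where
  "hcat F = (\<chi> i p. F (snd p) $ i $ fst p)"

definition block :: "real^('a::finite \<times> 't::finite) \<Rightarrow> 't \<Rightarrow> real^'a" where
  "block v t = (\<chi> m. v $ (m, t))"

definition stack :: "('t::finite \<Rightarrow> real^'a::finite) \<Rightarrow> real^('a \<times> 't)" where
  "stack f = (\<chi> p. f (snd p) $ fst p)"

lemma Lcat_eq_hcat: "Lcat B \<rho> z = hcat (Ltil B \<rho> z)"
  by (simp add: Lcat_def hcat_def)

lemma Mcat_eq_hcat: "Mcat B z = hcat (Mtil B z)"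
  by (simp add: Mcat_def hcat_def)

lemma block_stack [simp]: "block (stack f) = f"
  by (simp add: block_def stack_def fun_eq_iff vec_eq_iff)

lemma stack_block [simp]: "stack (block v) = v"
  by (simp add: block_def stack_def vec_eq_iff)

lemma sum_UNIV_prod:
  "(\<Sum>p\<in>UNIV. g p) = (\<Sum>t\<in>UNIV. \<Sum>m\<in>UNIV. g (m, t :: 't::finite))"
  by (subst sum.swap) (simp add: sum.cartesian_product flip: UNIV_Times_UNIV)

lemma stack_scaleR: "stack (\<lambda>t. c *\<^sub>R f t) = c *\<^sub>R stack f"
  by (simp add: stack_def vec_eq_iff)

lemma inner_stack: "stack f \<bullet> stack g = (\<Sum>t\<in>UNIV. f t \<bullet> g t)"
  by (simp add: stack_def inner_vec_def sum_UNIV_prod)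

lemma hcat_mult_vec: "hcat F *v v = (\<Sum>t\<in>UNIV. F t *v block v t)"
  by (simp add: vec_eq_iff hcat_def block_def matrix_vector_mult_def sum_UNIV_prod)

lemma transpose_hcat_mult_vec: "transpose (hcat F) *v x = stack (\<lambda>t. transpose (F t) *v x)"
  by (simp add: vec_eq_iff hcat_def stack_def matrix_vector_mult_def transpose_def)

lemma hcat_gram_mult_vec:
  "(hcat F ** transpose (hcat F)) *v x = (\<Sum>t\<in>UNIV. F t *v (transpose (F t) *v x))"
  by (simp add: matrix_vector_mul_assoc[symmetric] hcat_mult_vec transpose_hcat_mult_vec)

lemma left_singular_vector_hcat_lift:
  fixes G :: "real^'k^'n" and F :: "'t::finite \<Rightarrow> real^'n^'n" and M :: "'t \<Rightarrow> real^'k^'k"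
  assumes iso: "transpose G ** G = mat 1"
    and F_G: "\<And>t y. F t *v (G *v y) = G *v (M t *v y)"
    and Ft_G: "\<And>t y. transpose (F t) *v (G *v y) = G *v (transpose (M t) *v y)"
    and sv: "left_singular_vector (hcat M) \<sigma> x"
  shows "left_singular_vector (hcat F) \<sigma> (G *v x)"
proof -
  obtain v where "\<sigma> \<ge> 0" "norm x = 1" "norm v = 1"
    and Mv: "hcat M *v v = \<sigma> *\<^sub>R x" and Mtx: "transpose (hcat M) *v x = \<sigma> *\<^sub>R v"
    using sv unfolding left_singular_vector_def by blast
  define v' where "v' = stack (\<lambda>t. G *v block v t)"
  have "v' \<bullet> v' = stack (block v) \<bullet> stack (block v)"
    by (simp only: v'_def inner_stack isometry_inner[OF iso])
  then have "norm v' = 1"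
    using \<open>norm v = 1\<close> by (simp add: norm_eq_1)
  moreover have "norm (G *v x) = 1"
    using \<open>norm x = 1\<close> by (simp add: norm_eq_1 isometry_inner[OF iso])
  moreover have "hcat F *v v' = \<sigma> *\<^sub>R (G *v x)"
    using Mv by (simp add: v'_def hcat_mult_vec F_G flip: matrix_vector_mult_sum matrix_vector_mult_scaleR)
  moreover have "transpose (hcat F) *v (G *v x) = \<sigma> *\<^sub>R v'"
  proof -
    have "transpose (M t) *v x = \<sigma> *\<^sub>R block v t" for t
      using arg_cong[OF Mtx, of "\<lambda>w. block w t"]
      by (simp add: transpose_hcat_mult_vec block_def vec_eq_iff)
    then show ?thesis
      by (simp add: transpose_hcat_mult_vec Ft_G v'_def matrix_vector_mult_scaleR stack_scaleR)
  qed
  ultimately show ?thesis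
    using \<open>\<sigma> \<ge> 0\<close> unfolding left_singular_vector_def by blast
qed

section \<open>Compressions by matrices with orthonormal columns\<close>

lemma compression_mult_isometry:
  fixes G :: "real^'k^'n" and S :: "real^'k^'k"
  assumes "transpose G ** G = mat 1"
  shows "(mat 1 - G ** S ** transpose G) *v (G *v y) = G *v ((mat 1 - S) *v y)"
proof -
  have "(G ** S ** transpose G) *v (G *v y) = G *v (S *v y)"
    by (simp add: matrix_vector_mul_assoc assms flip: matrix_mul_assoc)
  then show ?thesis
    by (simp add: matrix_vector_mult_diff_rdistrib matrix_vector_mult_diff_distrib)
qed

lemma compression_mult_orthogonal:
  fixes G :: "real^'k^'n" and S :: "real^'k^'k"
  assumes "transpose G *v x = 0"
  shows "(mat 1 - G ** S ** transpose G) *v x = x"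
  by (simp add: matrix_vector_mult_diff_rdistrib assms flip: matrix_vector_mul_assoc)

lemma transpose_compression:
  fixes G :: "real^'k^'n" and S :: "real^'k^'k"
  shows "transpose (mat 1 - G ** S ** transpose G) = mat 1 - G ** transpose S ** transpose G"
  by (simp add: transpose_diff matrix_transpose_mul matrix_mul_assoc)

section \<open>The normalized membership matrix\<close>

abbreviation Psi :: "('n \<Rightarrow> 'k::finite) \<Rightarrow> real^'k^'n" where
  "Psi z \<equiv> Phi z ** Ninvsqrt z"

lemma Psi_entry: "Psi z $ i $ k = (if z i = k then 1 / sqrt (real (csize z k)) else 0)"
  by (simp add: Ninvsqrt_def mult_diag_mat_entry Phi_def)

lemma transpose_Psi_mult_Psi:
  fixes z :: "'n::finite \<Rightarrow> 'k::finite"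
  assumes "\<And>k. 0 < csize z k"
  shows "transpose (Psi z) ** Psi z = mat 1"
proof -
  have "(\<Sum>i\<in>UNIV. Psi z $ i $ k * Psi z $ i $ l) = (if k = l then 1 else 0)" for k l
  proof -
    have "(\<Sum>i\<in>UNIV. Psi z $ i $ k * Psi z $ i $ l)
        = (\<Sum>i\<in>UNIV. if z i = k then (if k = l then 1 / real (csize z k) else 0) else 0)"
      by (rule sum.cong) (auto simp: Psi_entry real_sqrt_mult[symmetric])
    also have "\<dots> = (if k = l then 1 else 0)"
      using assms[of k] by (auto simp: sum.If_cases csize_def Collect_conv_if)
    finally show ?thesis .
  qed
  then show ?thesis
    by (simp add: vec_eq_iff matrix_matrix_mult_def transpose_def mat_def)
qed

lemma transpose_Psi_mult_Sperp:
  fixes z :: "'n::finite \<Rightarrow> 'k::finite"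
  assumes "x \<in> Sperp z"
  shows "transpose (Psi z) *v x = 0"
proof -
  have "(\<Sum>i\<in>UNIV. Psi z $ i $ k * x $ i) = 1 / sqrt (real (csize z k)) * (\<Sum>i\<in>{i. z i = k}. x $ i)" for k
    by (simp add: Psi_entry sum_distrib_left sum.inter_filter[symmetric]
        if_distrib[of "\<lambda>a. a * _"] cong: if_cong)
  then show ?thesis
    using assms by (simp add: Sperp_def vec_eq_iff matrix_vector_mult_def transpose_def)
qed

lemma Psi_mult_in_Sspace: "Psi z *v y \<in> Sspace z"
  unfolding Sspace_def matrix_vector_mul_assoc[symmetric]
  by (rule matrix_vector_mult_in_columnspace)

lemma Psi_conj_entry:
  fixes z :: "'n::finite \<Rightarrow> 'k::finite"
  shows "(Psi z ** X ** transpose (Psi z)) $ i $ j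
     = X $ z i $ z j / (sqrt (real (csize z (z i))) * sqrt (real (csize z (z j))))"
proof -
  have "(G ** X ** transpose G) $ i $ j = (\<Sum>l\<in>UNIV. (\<Sum>k\<in>UNIV. G $ i $ k * X $ k $ l) * G $ j $ l)"
    for G :: "real^'k^'n"
    by (simp add: matrix_matrix_mult_def transpose_def)
  then show ?thesis
    by (simp add: Psi_entry if_distrib[of "\<lambda>x. x * _"] if_distrib[of "\<lambda>x. _ * x"] cong: if_cong)
qed

lemma inner_column_Phi: "column k (Phi z) \<bullet> y = (\<Sum>i\<in>{i. z i = k}. y $ i)"
  by (simp add: column_def Phi_def inner_vec_def sum.inter_filter[symmetric]
      if_distrib[of "\<lambda>a. a * _"] cong: if_cong)

lemma Sperp_eq_orthogonal_Sspace: "Sperp z = {y. \<forall>x\<in>Sspace z. orthogonal x y}"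
proof (intro set_eqI iffI)
  fix y assume y: "y \<in> Sperp z"
  have "orthogonal y x" if "x \<in> Sspace z" for x
    using that unfolding Sspace_def
  proof (rule orthogonal_to_span)
    fix c assume "c \<in> columns (Phi z)"
    then obtain k where "c = column k (Phi z)" by (auto simp: columns_def)
    then show "orthogonal y c"
      using y by (simp add: orthogonal_def inner_commute[of y] inner_column_Phi Sperp_def)
  qed
  then show "y \<in> {y. \<forall>x\<in>Sspace z. orthogonal x y}"
    by (simp add: orthogonal_commute)
next
  fix y assume "y \<in> {y. \<forall>x\<in>Sspace z. orthogonal x y}"
  then have "orthogonal (column k (Phi z)) y" for k
    unfolding Sspace_def by (auto intro: span_base simp: columns_def)
  then show "y \<in> Sperp z"
    by (simp add: Sperp_def orthogonal_def inner_column_Phi)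
qed

lemma subspace_Sperp:
  fixes z :: "'n::finite \<Rightarrow> 'k::finite"
  shows "subspace (Sperp z)"
  unfolding Sperp_eq_orthogonal_Sspace by (simp add: subspace_def orthogonal_clauses)

lemma dim_Sspace:
  fixes z :: "'n::finite \<Rightarrow> 'k::finite"
  assumes sizes: "\<And>k. 0 < csize z k"
  shows "dim (Sspace z) = CARD('k)"
proof -
  have col: "column k (Phi z) $ i = (if z i = k then 1 else 0)" for k i
    by (simp add: column_def Phi_def)
  have member: "\<exists>i. z i = k" for k
    using sizes[of k] by (auto simp: csize_def card_gt_0_iff)
  have cols: "columns (Phi z) = range (\<lambda>k. column k (Phi z))"
    by (auto simp: columns_def)
  have inj: "inj (\<lambda>k. column k (Phi z))"
  proof
    fix k l assume "column k (Phi z) = column l (Phi z)"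
    moreover obtain i where "z i = k" using member by blast
    ultimately show "k = l" using col by (metis zero_neq_one)
  qed
  have "pairwise orthogonal (columns (Phi z))"
    unfolding pairwise_def cols by (auto simp: orthogonal_def inner_column_Phi col)
  moreover have "0 \<notin> columns (Phi z)"
  proof
    assume "0 \<in> columns (Phi z)"
    then obtain k where "column k (Phi z) = 0" by (auto simp: cols)
    moreover obtain i where "z i = k" using member by blast
    ultimately show False using col[of k i] by simp
  qed
  ultimately have "independent (columns (Phi z))"
    by (rule pairwise_orthogonal_independent)
  then have "dim (Sspace z) = card (columns (Phi z))"
    unfolding Sspace_def dim_span by (rule dim_eq_card_independent)
  also have "\<dots> = CARD('k)"
    unfolding cols using inj by (simp add: card_image)
  finally show ?thesis .
qed

lemma dim_Sperp:
  fixes z :: "'n::finite \<Rightarrow> 'k::finite"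
  assumes "\<And>k. 0 < csize z k"
  shows "dim (Sperp z) = CARD('n) - CARD('k)"
proof -
  have "dim {y \<in> UNIV. \<forall>x\<in>Sspace z. orthogonal x y} + dim (Sspace z) = dim (UNIV :: (real^'n) set)"
    by (rule dim_subspace_orthogonal_to_vectors) (auto simp: Sspace_def)
  then show ?thesis
    unfolding Sperp_eq_orthogonal_Sspace dim_Sspace[OF assms] by simp
qed

section \<open>Normalized Laplacians of the block model\<close>

lemma sum_by_community:
  fixes z :: "'n::finite \<Rightarrow> 'k::finite"
  shows "(\<Sum>j\<in>UNIV. f (z j)) = (\<Sum>l\<in>UNIV. real (csize z l) * (f l :: real))"
proof -
  have "(\<Sum>j\<in>UNIV. f (z j)) = (\<Sum>l\<in>UNIV. \<Sum>j\<in>UNIV. if z j = l then f l else 0)"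
    by (subst sum.swap) simp
  also have "\<dots> = (\<Sum>l\<in>UNIV. real (csize z l) * f l)"
    by (simp add: sum.If_cases csize_def Collect_conv_if)
  finally show ?thesis .
qed

definition cdeg :: "('t \<Rightarrow> real^'k^'k) \<Rightarrow> ('n \<Rightarrow> 'k::finite) \<Rightarrow> 't \<Rightarrow> 'k \<Rightarrow> real" where
  "cdeg B z t k = (\<Sum>l\<in>UNIV. real (csize z l) * B t $ k $ l)"

definition Qnorm :: "('t \<Rightarrow> real^'k^'k) \<Rightarrow> ('n::finite \<Rightarrow> 'k::finite) \<Rightarrow> 't \<Rightarrow> real^'k^'k" where
  "Qnorm B z t = diag_mat (\<chi> k. 1 / sqrt (DQ B z t $ k $ k)) ** Qmat B z t
                   ** diag_mat (\<chi> k. 1 / sqrt (DQ B z t $ k $ k))"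

lemma Mtil_eq_Qnorm: "Mtil B z t = mat 1 - Qnorm B z t"
  by (simp add: Mtil_def Qnorm_def)

lemma dtil_eq_cdeg: "dtil B \<rho> z t $ i = \<rho> * cdeg B z t (z i)"
  unfolding dtil_def Pmat_def cdeg_def
  by (simp add: sum_by_community[where f = "\<lambda>l. \<rho> * B t $ z i $ l"] sum_distrib_left mult.left_commute)

lemma DQ_eq_cdeg:
  fixes z :: "'n::finite \<Rightarrow> 'k::finite"
  shows "DQ B z t $ k $ k = real (csize z k) * cdeg B z t k / (real CARD('n))\<^sup>2"
  unfolding DQ_def diag_mat_def Qmat_def cdeg_def
  by (simp add: sum_distrib_left sum_divide_distrib power2_eq_square field_simps)

context
  fixes B :: "'t::finite \<Rightarrow> real^'k::finite^'k" and \<rho> :: real and z :: "'n::finite \<Rightarrow> 'k"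
  assumes B_pos: "\<And>t k l. 0 < B t $ k $ l"
    and sizes: "\<And>k. 0 < csize z k"
    and rho_pos: "0 < \<rho>"
begin

lemma cdeg_pos: "0 < cdeg B z t k"
  unfolding cdeg_def by (rule sum_pos) (use B_pos sizes in auto)

lemma Qnorm_entry:
  "Qnorm B z t $ k $ l = sqrt (real (csize z k)) * sqrt (real (csize z l)) * B t $ k $ l
                           / (sqrt (cdeg B z t k) * sqrt (cdeg B z t l))"
proof -
  have "0 < cdeg B z t k" "0 < cdeg B z t l" "0 < real (csize z k)" "0 < real (csize z l)"
    using cdeg_pos sizes by auto
  moreover have "real (csize z m) = sqrt (real (csize z m)) * sqrt (real (csize z m))" for m
    by simp
  ultimately show ?thesis
    unfolding Qnorm_def
    by (simp add: diag_mat_mult_entry mult_diag_mat_entry DQ_eq_cdeg Qmat_def real_sqrt_mult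
        real_sqrt_divide field_simps)
qed

lemma Ltil_eq_compression:
  "Ltil B \<rho> z t = mat 1 - Psi z ** Qnorm B z t ** transpose (Psi z)"
proof -
  define P' where "P' = diag_mat (\<chi> i. 1 / sqrt (dtil B \<rho> z t $ i)) ** Pmat B \<rho> z t
                         ** diag_mat (\<chi> i. 1 / sqrt (dtil B \<rho> z t $ i))"
  have "P' $ i $ j = (Psi z ** Qnorm B z t ** transpose (Psi z)) $ i $ j" for i j
  proof -
    have "0 < cdeg B z t (z i)" "0 < cdeg B z t (z j)" "0 < real (csize z (z i))" "0 < real (csize z (z j))"
      using cdeg_pos sizes by auto
    then show ?thesis
      using rho_pos unfolding P'_def Psi_conj_entry Qnorm_entry
      by (simp add: diag_mat_mult_entry mult_diag_mat_entry dtil_eq_cdeg Pmat_def real_sqrt_mult field_simps)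
  qed
  then show ?thesis
    unfolding Ltil_def P'_def[symmetric] by (simp add: vec_eq_iff)
qed

lemma Ltil_mult_Psi: "Ltil B \<rho> z t *v (Psi z *v y) = Psi z *v (Mtil B z t *v y)"
  unfolding Ltil_eq_compression Mtil_eq_Qnorm
  by (rule compression_mult_isometry[OF transpose_Psi_mult_Psi[OF sizes]])

lemma transpose_Ltil_mult_Psi:
  "transpose (Ltil B \<rho> z t) *v (Psi z *v y) = Psi z *v (transpose (Mtil B z t) *v y)"
  unfolding Ltil_eq_compression transpose_compression Mtil_eq_Qnorm
  unfolding transpose_diff transpose_mat
  by (rule compression_mult_isometry[OF transpose_Psi_mult_Psi[OF sizes]])

lemma left_singular_vector_Lcat_lift:
  assumes "left_singular_vector (Mcat B z) \<sigma> x"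
  shows "left_singular_vector (Lcat B \<rho> z) \<sigma> (Psi z *v x)"
  using transpose_Psi_mult_Psi[OF sizes] Ltil_mult_Psi transpose_Ltil_mult_Psi assms
  unfolding Lcat_eq_hcat Mcat_eq_hcat by (rule left_singular_vector_hcat_lift)

lemma Lcat_gram_Sperp:
  assumes "x \<in> Sperp z"
  shows "(Lcat B \<rho> z ** transpose (Lcat B \<rho> z)) *v x = real CARD('t) *\<^sub>R x"
proof -
  have "Ltil B \<rho> z t *v x = x" "transpose (Ltil B \<rho> z t) *v x = x" for t
    using compression_mult_orthogonal[OF transpose_Psi_mult_Sperp[OF assms]]
    by (simp_all add: Ltil_eq_compression transpose_compression)
  then show ?thesis
    by (simp add: Lcat_eq_hcat hcat_gram_mult_vec scaleR_conv_of_real)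
qed

lemma Lcat_singular_basis_Sperp:
  "\<exists>w :: nat \<Rightarrow> real^'n.
      orthonormal_on {..<CARD('n) - CARD('k)} w
    \<and> w ` {..<CARD('n) - CARD('k)} \<subseteq> Sperp z
    \<and> span (w ` {..<CARD('n) - CARD('k)}) = Sperp z
    \<and> (\<forall>j<CARD('n) - CARD('k). left_singular_vector (Lcat B \<rho> z) (sqrt (real CARD('t))) (w j))"
proof -
  obtain w where w: "orthonormal_on {..<CARD('n) - CARD('k)} w"
    "w ` {..<CARD('n) - CARD('k)} \<subseteq> Sperp z" "span (w ` {..<CARD('n) - CARD('k)}) = Sperp z"
    using subspace_orthonormal_basis_indexed[OF subspace_Sperp[of z]] unfolding dim_Sperp[OF sizes] .
  have "left_singular_vector (Lcat B \<rho> z) (sqrt (real CARD('t))) (w j)"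
    if "j < CARD('n) - CARD('k)" for j
  proof (rule left_singular_vector_of_eigen)
    show "(Lcat B \<rho> z ** transpose (Lcat B \<rho> z)) *v w j = real CARD('t) *\<^sub>R w j"
      using that w(2) by (intro Lcat_gram_Sperp) auto
    show "norm (w j) = 1"
      using that w(1) by (simp add: orthonormal_on_def norm_eq_1)
  qed simp
  with w show ?thesis
    by blast
qed

end

theorem lemma3:
  fixes B :: "'t::finite \<Rightarrow> real^'k::finite^'k"
    and \<rho> :: real
    and z :: "'n::finite \<Rightarrow> 'k"
    and lam :: "nat \<Rightarrow> real"
    and xt :: "nat \<Rightarrow> real^'k"
  assumes B_sym: "\<And>t. transpose (B t) = B t"
    and B_pos: "\<And>t k l. 0 < B t $ k $ l"
    and B_le1: "\<And>t k l. B t $ k $ l \<le> 1"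
    and rho: "0 < \<rho>" "\<rho> \<le> 1"
    and sizes: "\<And>k. 0 < csize z k"
    and lam_sorted: "\<And>i j. i \<le> j \<Longrightarrow> j < CARD('k) \<Longrightarrow> lam i \<le> lam j"
    and xt_sv: "\<And>i. i < CARD('k) \<Longrightarrow> left_singular_vector (Mcat B z) (lam i) (xt i)"
    and xt_on: "orthonormal_on {..<CARD('k)} xt"
  shows "(\<forall>x\<in>Sperp z. (Lcat B \<rho> z ** transpose (Lcat B \<rho> z)) *v x = real CARD('t) *\<^sub>R x)
       \<and> orthonormal_on {..<CARD('k)} (\<lambda>i. Phi z ** Ninvsqrt z *v xt i)
       \<and> (\<forall>i<CARD('k). Phi z ** Ninvsqrt z *v xt i \<in> Sspace z
            \<and> (Lcat B \<rho> z ** transpose (Lcat B \<rho> z)) *v (Phi z ** Ninvsqrt z *v xt i)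
                = (lam i)\<^sup>2 *\<^sub>R (Phi z ** Ninvsqrt z *v xt i))
       \<and> (\<exists>w :: nat \<Rightarrow> real^'n.
            orthonormal_on {..<CARD('n) - CARD('k)} w
          \<and> w ` {..<CARD('n) - CARD('k)} \<subseteq> Sperp z
          \<and> span (w ` {..<CARD('n) - CARD('k)}) = Sperp z
          \<and> (\<forall>j<CARD('n) - CARD('k). left_singular_vector (Lcat B \<rho> z) (sqrt (real CARD('t))) (w j)))
       \<and> (\<forall>i<CARD('k). left_singular_vector (Lcat B \<rho> z) (lam i) (Phi z ** Ninvsqrt z *v xt i))"
proof -
  have lift: "left_singular_vector (Lcat B \<rho> z) (lam i) (Psi z *v xt i)" if "i < CARD('k)" for i
    using left_singular_vector_Lcat_lift[OF B_pos sizes rho(1) xt_sv[OF that]] .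
  have "orthonormal_on {..<CARD('k)} (\<lambda>i. Psi z *v xt i)"
    using xt_on unfolding orthonormal_on_def isometry_inner[OF transpose_Psi_mult_Psi[OF sizes]] .
  moreover have "Psi z *v xt i \<in> Sspace z" for i
    by (rule Psi_mult_in_Sspace)
  ultimately show ?thesis
    using Lcat_gram_Sperp[of B z \<rho>, OF B_pos sizes rho(1)]
      Lcat_singular_basis_Sperp[of B z \<rho>, OF B_pos sizes rho(1)]
      lift left_singular_vector_eigen[OF lift] by simp
qed

end
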